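(* Let $\mathbf{B}$ be a binomial ring and let $x$ be an element of a divided power algebra over $\mathbf{B}$. Then for all $a\in\mathbf{B}$ and all positive integers $m$, $$a^m x^{[m]}=\sum_{k=1}^\infty\binom ak\sum_{\substack{g_1+\cdots+g_k=m\\ g_i\in\mathbb Z^+}}x^{[g_1]}\cdots x^{[g_k]}.$$
   Context: A binomial ring is a commutative unital ring, torsion-free as an abelian group, such that $\binom ak=a(a-1)\cdots(a-k+1)/k!\in\mathbf{B}$ for all $a\in\mathbf{B}$, $k\ge0$. In a divided power algebra, $x^{[g]}$ denotes the $g$-th divided power of $x$ (morally $x^g/g!$), satisfying $x^{[i]}x^{[j]}=\binom{i+j}ix^{[i+j]}$. The sum over $k$ is finite since the inner sum is empty for $k>m$. *)

theory Defs
  imports Main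
begin

text \<open>Binomial ring: commutative unital ring, torsion-free as an abelian group,
  such that a(a-1)...(a-k+1)/k! lies in the ring for all a and k, i.e. the falling
  product is divisible by k! (the quotient is unique by torsion-freeness).\<close>

definition binomial_ring :: "'b::comm_ring_1 itself \<Rightarrow> bool" where
  "binomial_ring _ \<longleftrightarrow>
     (\<forall>(n::nat) (a::'b). 0 < n \<and> of_nat n * a = 0 \<longrightarrow> a = 0) \<and>
     (\<forall>(a::'b) (k::nat). \<exists>b::'b. of_nat (fact k) * b = (\<Prod>i<k. a - of_nat i))"

definition ring_binom :: "'b::comm_ring_1 \<Rightarrow> nat \<Rightarrow> 'b" where
  "ring_binom a k = (THE b. of_nat (fact k) * b = (\<Prod>i<k. a - of_nat i))"

text \<open>Structure map of an algebra over B: a unital ring homomorphism B \<rightarrow> A.\<close>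
definition ring_hom_map :: "('b::comm_ring_1 \<Rightarrow> 'a::comm_ring_1) \<Rightarrow> bool" where
  "ring_hom_map \<phi> \<longleftrightarrow> \<phi> 1 = 1 \<and> (\<forall>a b. \<phi> (a + b) = \<phi> a + \<phi> b) \<and>
     (\<forall>a b. \<phi> (a * b) = \<phi> a * \<phi> b)"

text \<open>Divided power structure (Berthelot) on an ideal I of a commutative ring A;
  \<gamma> n x is the divided power x^[n].\<close>
definition divided_power_structure :: "'a::comm_ring_1 set \<Rightarrow> (nat \<Rightarrow> 'a \<Rightarrow> 'a) \<Rightarrow> bool" where
  "divided_power_structure I \<gamma> \<longleftrightarrow>
     0 \<in> I \<and> (\<forall>x\<in>I. \<forall>y\<in>I. x + y \<in> I) \<and> (\<forall>r. \<forall>x\<in>I. r * x \<in> I) \<and>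
     (\<forall>x\<in>I. \<gamma> 0 x = 1) \<and> (\<forall>x\<in>I. \<gamma> 1 x = x) \<and>
     (\<forall>x\<in>I. \<forall>n\<ge>1. \<gamma> n x \<in> I) \<and>
     (\<forall>x\<in>I. \<forall>y\<in>I. \<forall>n. \<gamma> n (x + y) = (\<Sum>i\<le>n. \<gamma> i x * \<gamma> (n - i) y)) \<and>
     (\<forall>r. \<forall>x\<in>I. \<forall>n. \<gamma> n (r * x) = r ^ n * \<gamma> n x) \<and>
     (\<forall>x\<in>I. \<forall>i j. \<gamma> i x * \<gamma> j x = of_nat ((i + j) choose i) * \<gamma> (i + j) x) \<and>
     (\<forall>x\<in>I. \<forall>p q. 1 \<le> q \<longrightarrow>
        \<gamma> p (\<gamma> q x) = of_nat (fact (p * q) div (fact p * fact q ^ p)) * \<gamma> (p * q) x)"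

end

theory Submission
  imports Defs "HOL-Combinatorics.Stirling"
begin

text \<open>By the rule x^[i] x^[j] = (i+j choose i) x^[i+j], the product x^[g_1] ... x^[g_k]
  over a composition g of m is the multinomial coefficient (m; g_1, ..., g_k) times x^[m].
  Summed over all compositions of m into k positive parts, these coefficients count the
  surjections from an m-set onto a k-set, i.e. k! S(m,k). Since k! (a choose k) is the
  falling factorial a(a-1)...(a-k+1), the right-hand side becomes
  (\<Sum>k. S(m,k) a(a-1)...(a-k+1)) x^[m], and the expansion of a^m into falling factorials
  with Stirling numbers of the second kind as coefficients holds in every commutative ring.\<close>

definition ffact :: "'a::comm_ring_1 \<Rightarrow> nat \<Rightarrow> 'a" where
  "ffact a k = (\<Prod>i<k. a - of_nat i)"

lemma ffact_0 [simp]: "ffact a 0 = 1"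
  by (simp add: ffact_def)

lemma ffact_Suc: "ffact a (Suc k) = ffact a k * (a - of_nat k)"
  by (simp add: ffact_def)

lemma mult_ffact: "a * ffact a k = ffact a (Suc k) + of_nat k * ffact a k"
  by (simp add: ffact_Suc algebra_simps)

lemma power_eq_sum_Stirling_ffact:
  "(a::'a::comm_ring_1) ^ m = (\<Sum>k\<le>m. of_nat (Stirling m k) * ffact a k)"
proof (induction m)
  case 0
  then show ?case by simp
next
  case (Suc m)
  have "a ^ Suc m = (\<Sum>k\<le>m. of_nat (Stirling m k) * (a * ffact a k))"
    by (simp add: Suc sum_distrib_left algebra_simps)
  also have "\<dots> = (\<Sum>k\<le>m. of_nat (Stirling m k) * ffact a (Suc k))
       + (\<Sum>k\<le>m. of_nat k * of_nat (Stirling m k) * ffact a k)"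
    by (simp add: mult_ffact algebra_simps sum.distrib)
  also have "(\<Sum>k\<le>m. of_nat k * of_nat (Stirling m k) * ffact a k)
     = (\<Sum>k\<le>Suc m. of_nat k * of_nat (Stirling m k) * (ffact a k :: 'a))"
    by simp
  also have "\<dots> = (\<Sum>k\<le>m. of_nat (Suc k) * of_nat (Stirling m (Suc k)) * ffact a (Suc k))"
    by (subst sum.atMost_Suc_shift) simp
  finally have "a ^ Suc m = (\<Sum>k\<le>m. of_nat (Stirling (Suc m) (Suc k)) * ffact a (Suc k))"
    by (simp add: sum.distrib[symmetric] algebra_simps)
  also have "\<dots> = (\<Sum>k\<le>Suc m. of_nat (Stirling (Suc m) k) * ffact a k)"
    by (subst sum.atMost_Suc_shift) simp
  finally show ?case .
qed

lemma sum_binomial_Stirling: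
  "(\<Sum>j<m. (m choose j) * Stirling j k) = Suc k * Stirling m (Suc k)"
proof (induction m arbitrary: k)
  case 0
  then show ?case by simp
next
  case (Suc m)
  have "(\<Sum>j<Suc m. (Suc m choose j) * Stirling j k)
      = Stirling 0 k + (\<Sum>i<m. (m choose Suc i) * Stirling (Suc i) k)
      + (\<Sum>i<m. (m choose i) * Stirling (Suc i) k)"
    by (subst sum.lessThan_Suc_shift) (simp add: sum.distrib algebra_simps)
  also have "Stirling 0 k + (\<Sum>i<m. (m choose Suc i) * Stirling (Suc i) k)
      = (\<Sum>j<Suc m. (m choose j) * Stirling j k)"
    by (subst sum.lessThan_Suc_shift) simp
  also have "\<dots> = (\<Sum>j<m. (m choose j) * Stirling j k) + Stirling m k"
    by simp
  finally have split: "(\<Sum>j<Suc m. (Suc m choose j) * Stirling j k)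
     = Suc k * Stirling m (Suc k) + Stirling m k + (\<Sum>i<m. (m choose i) * Stirling (Suc i) k)"
    using Suc by simp
  show ?case
  proof (cases k)
    case 0
    then show ?thesis using split by simp
  next
    case (Suc k')
    have "(\<Sum>i<m. (m choose i) * Stirling (Suc i) k)
        = Suc k' * (\<Sum>i<m. (m choose i) * Stirling i k) + (\<Sum>i<m. (m choose i) * Stirling i k')"
      by (simp add: Suc sum.distrib sum_distrib_left algebra_simps)
    also have "\<dots> = Suc k' * (Suc k * Stirling m (Suc k)) + Suc k' * Stirling m k"
      using Suc.IH[of k] Suc.IH[of k'] \<open>k = Suc k'\<close> by simp
    finally show ?thesis using split \<open>k = Suc k'\<close> by (simp add: algebra_simps)
  qed
qed

definition compositions :: "nat \<Rightarrow> nat \<Rightarrow> nat list set" where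
  "compositions m k = {gs. length gs = k \<and> (\<forall>g\<in>set gs. 0 < g) \<and> sum_list gs = m}"

fun multinomial :: "nat list \<Rightarrow> nat" where
  "multinomial [] = 1"
| "multinomial (g # gs) = (g + sum_list gs choose g) * multinomial gs"

lemma finite_compositions: "finite (compositions m k)"
proof (rule finite_subset)
  show "compositions m k \<subseteq> {gs. set gs \<subseteq> {..m} \<and> length gs = k}"
    unfolding compositions_def using member_le_sum_list by fastforce
  show "finite {gs. set gs \<subseteq> {..m} \<and> length gs = k}"
    by (rule finite_lists_length_eq) simp
qed

lemma compositions_0: "compositions m 0 = (if m = 0 then {[]} else {})"
  by (auto simp: compositions_def)

lemma compositions_Suc:
  "compositions m (Suc k) = (\<lambda>(g, gs). g # gs) ` (SIGMA g:{1..m}. compositions (m - g) k)"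
proof (intro equalityI subsetI)
  fix gs assume "gs \<in> compositions m (Suc k)"
  then obtain g gs' where "gs = g # gs'" "(g, gs') \<in> (SIGMA g:{1..m}. compositions (m - g) k)"
    unfolding compositions_def by (cases gs) auto
  then show "gs \<in> (\<lambda>(g, gs). g # gs) ` (SIGMA g:{1..m}. compositions (m - g) k)"
    by force
qed (auto simp: compositions_def)

lemma sum_multinomial_compositions_Suc:
  "(\<Sum>gs\<in>compositions m (Suc k). multinomial gs)
     = (\<Sum>g\<in>{1..m}. (m choose g) * (\<Sum>gs\<in>compositions (m - g) k. multinomial gs))"
proof -
  have inj: "inj_on (\<lambda>(g, gs). g # gs) (SIGMA g:{1..m}. compositions (m - g) k)"
    by (auto simp: inj_on_def)
  have "(\<Sum>gs\<in>compositions m (Suc k). multinomial gs)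
      = (\<Sum>g\<in>{1..m}. \<Sum>gs\<in>compositions (m - g) k. multinomial (g # gs))"
    unfolding compositions_Suc
    by (subst sum.reindex[OF inj]) (simp add: sum.Sigma finite_compositions case_prod_unfold)
  also have "\<dots> = (\<Sum>g\<in>{1..m}. \<Sum>gs\<in>compositions (m - g) k. (m choose g) * multinomial gs)"
    by (intro sum.cong refl) (auto simp: compositions_def)
  finally show ?thesis
    by (simp add: sum_distrib_left)
qed

lemma sum_multinomial_compositions:
  "(\<Sum>gs\<in>compositions m k. multinomial gs) = fact k * Stirling m k"
proof (induction k arbitrary: m)
  case 0
  then show ?case by (cases m) (auto simp: compositions_0)
next
  case (Suc k)
  have "(\<Sum>gs\<in>compositions m (Suc k). multinomial gs)
      = (\<Sum>g\<in>{1..m}. (m choose (m - g)) * (fact k * Stirling (m - g) k))"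
    by (simp add: sum_multinomial_compositions_Suc Suc binomial_symmetric[symmetric])
  also have "\<dots> = (\<Sum>j<m. (m choose j) * (fact k * Stirling j k))"
    by (rule sum.reindex_bij_witness[of _ "\<lambda>j. m - j" "\<lambda>g. m - g"]) auto
  also have "\<dots> = fact (Suc k) * Stirling m (Suc k)"
    by (simp add: sum_distrib_left[symmetric] algebra_simps sum_binomial_Stirling
        flip: sum_distrib_left)
  finally show ?case .
qed

lemma fact_mult_ring_binom:
  assumes "binomial_ring TYPE('a::comm_ring_1)"
  shows "of_nat (fact k) * ring_binom (a::'a) k = ffact a k"
proof -
  have torsion_free: "\<And>(n::nat) (b::'a). 0 < n \<Longrightarrow> of_nat n * b = 0 \<Longrightarrow> b = 0"
    and "\<exists>b::'a. of_nat (fact k) * b = ffact a k"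
    using assms by (auto simp: binomial_ring_def ffact_def)
  then obtain b :: 'a where b: "of_nat (fact k) * b = ffact a k"
    by blast
  have "c = b" if "of_nat (fact k) * c = ffact a k" for c
  proof -
    have "of_nat (fact k) * (c - b) = 0"
      using b that by (simp add: algebra_simps)
    then show ?thesis
      using torsion_free[of "fact k" "c - b"] by simp
  qed
  with b have "\<exists>!b. of_nat (fact k) * b = ffact a k"
    by blast
  then show ?thesis
    unfolding ring_binom_def ffact_def[symmetric] by (rule theI')
qed

lemma power_eq_sum_ring_binom:
  assumes "binomial_ring TYPE('a::comm_ring_1)" and "0 < m"
  shows "(a::'a) ^ m = (\<Sum>k\<in>{1..m}. of_nat (fact k * Stirling m k) * ring_binom a k)"
proof -
  have "{..m} = insert 0 {1..m}"
    by auto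
  moreover have "Stirling m 0 = 0"
    using \<open>0 < m\<close> by (cases m) auto
  ultimately have "a ^ m = (\<Sum>k\<in>{1..m}. of_nat (Stirling m k) * ffact a k)"
    by (simp add: power_eq_sum_Stirling_ffact[of a m])
  then show ?thesis
    by (simp add: fact_mult_ring_binom[OF assms(1), symmetric] mult_ac)
qed

lemma ring_hom_map_of_nat_mult:
  assumes "ring_hom_map \<phi>"
  shows "\<phi> (of_nat n * a) = of_nat n * \<phi> a"
proof -
  have "\<phi> 0 = 0"
    using assms unfolding ring_hom_map_def by (metis add_cancel_right_right)
  then have "\<phi> (of_nat n) = of_nat n"
    using assms by (induction n) (simp_all add: ring_hom_map_def)
  then show ?thesis
    using assms by (simp add: ring_hom_map_def)
qed

lemma ring_hom_map_sum:
  assumes "ring_hom_map \<phi>"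
  shows "\<phi> (sum f A) = (\<Sum>i\<in>A. \<phi> (f i))"
proof -
  have "\<phi> 0 = 0"
    using assms unfolding ring_hom_map_def by (metis add_cancel_right_right)
  then show ?thesis
    using assms by (induction A rule: infinite_finite_induct) (simp_all add: ring_hom_map_def)
qed

lemma ring_hom_map_power:
  assumes "ring_hom_map \<phi>"
  shows "\<phi> (a ^ n) = \<phi> a ^ n"
  using assms by (induction n) (simp_all add: ring_hom_map_def)

lemma prod_list_divided_powers:
  assumes "divided_power_structure I \<gamma>" and "x \<in> I"
  shows "prod_list (map (\<lambda>g. \<gamma> g x) gs) = of_nat (multinomial gs) * \<gamma> (sum_list gs) x"
proof (induction gs)
  case Nil
  then show ?case
    using assms by (simp add: divided_power_structure_def)
next
  case (Cons g gs)
  have "\<gamma> g x * \<gamma> (sum_list gs) x = of_nat (g + sum_list gs choose g) * \<gamma> (g + sum_list gs) x"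
    using assms by (simp add: divided_power_structure_def)
  with Cons show ?case
    by (simp add: algebra_simps)
qed

lemma sum_prod_divided_powers_compositions:
  assumes "divided_power_structure I \<gamma>" and "x \<in> I"
  shows "(\<Sum>gs\<in>compositions m k. prod_list (map (\<lambda>g. \<gamma> g x) gs))
    = of_nat (fact k * Stirling m k) * \<gamma> m x"
proof -
  have "(\<Sum>gs\<in>compositions m k. prod_list (map (\<lambda>g. \<gamma> g x) gs))
      = (\<Sum>gs\<in>compositions m k. of_nat (multinomial gs) * \<gamma> m x)"
    by (intro sum.cong refl)
      (simp add: prod_list_divided_powers[OF assms] compositions_def)
  also have "\<dots> = of_nat (\<Sum>gs\<in>compositions m k. multinomial gs) * \<gamma> m x"
    by (simp add: sum_distrib_right)
  finally show ?thesis
    by (simp only: sum_multinomial_compositions)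
qed

theorem mainTheorem20:
  fixes \<phi> :: "'b::comm_ring_1 \<Rightarrow> 'a::comm_ring_1"
    and I :: "'a set" and \<gamma> :: "nat \<Rightarrow> 'a \<Rightarrow> 'a"
    and x :: 'a and a :: 'b and m :: nat
  assumes "binomial_ring TYPE('b)"
    and "ring_hom_map \<phi>"
    and "divided_power_structure I \<gamma>"
    and "x \<in> I"
    and "0 < m"
  shows "\<phi> a ^ m * \<gamma> m x =
    (\<Sum>k\<in>{1..m}. \<phi> (ring_binom a k) *
       (\<Sum>gs\<in>{gs. length gs = k \<and> (\<forall>g\<in>set gs. 0 < g) \<and> sum_list gs = m}.
          prod_list (map (\<lambda>g. \<gamma> g x) gs)))"
proof -
  have "\<phi> a ^ m = (\<Sum>k\<in>{1..m}. of_nat (fact k * Stirling m k) * \<phi> (ring_binom a k))"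
    using arg_cong[OF power_eq_sum_ring_binom[OF assms(1,5), of a], of \<phi>]
    by (simp add: ring_hom_map_power ring_hom_map_sum ring_hom_map_of_nat_mult assms(2)
        del: of_nat_mult)
  then have "\<phi> a ^ m * \<gamma> m x
      = (\<Sum>k\<in>{1..m}. \<phi> (ring_binom a k) * (of_nat (fact k * Stirling m k) * \<gamma> m x))"
    by (simp add: sum_distrib_left mult_ac del: of_nat_mult)
  then show ?thesis
    by (simp only: sum_prod_divided_powers_compositions[OF assms(3,4), unfolded compositions_def])
qed

end
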